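(* Let $\mathcal O$ be the suboperad of $\mathrm{CNCB}$ generated by $s:=T_{ubb}$ and $w:=T_{bub}$. Then $\mathcal O$ admits the presentation with generators $s,w$ of arity $2$ and relations $$w\circ_1 w=w\circ_2 w,\qquad s\circ_1 s=s\circ_2 w.$$ That is, $\mathcal O$ is isomorphic, via the morphism sending the generators to $s$ and $w$, to the quotient of the free operad on two binary generators by the operadic congruence generated by these relations.
   Context: For $n\ge2$, a bicoloured noncrossing configuration (BNC) of size $n$ is a regular polygon with vertices $1,\dots,n+1$ clockwise, together with disjoint sets of blue and red arcs among the arcs $(i,j)$, $1\le i<j\le n+1$. The arcs $(i,i+1)$ are the edges ($i$th edge), $(1,n+1)$ is the base, and the others are diagonals. Coloured arcs are pairwise noncrossing ($(i,j),(k,l)$ cross iff $i<k<j<l$ or $k<i<l<j$), and red arcs are diagonals. There is one BNC of size $1$, a blue segment, which is the unit. The operad $\mathrm{CNCB}$ has the BNCs as elements (arity = size). Its composition $\mathfrak C\circ_i\mathfrak D$ ($\mathfrak C$ of size $n$, $\mathfrak D$ of size $m$) glues the base of $\mathfrak D$ on the $i$th edge of $\mathfrak C$. Arcs $(a,b)$ of $\mathfrak C$ become $(\sigma(a),\sigma(b))$ with $\sigma(v)=v$ for $v\le i$ and $v+m-1$ otherwise, and arcs $(a,b)$ of $\mathfrak D$ become $(a+i-1,b+i-1)$, keeping colours. The exception is the arc $(i,i+m)$, which is red if the $i$th edge of $\mathfrak C$ and the base of $\mathfrak D$ are both uncoloured, blue if both are blue, and uncoloured otherwise. For $x,y,z\in\{b,u\}$,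 $T_{xyz}$ denotes the BNC of size $2$ (a triangle with vertices $1,2,3$) whose first edge $(1,2)$ has colour $x$, whose base $(1,3)$ has colour $y$, and whose second edge $(2,3)$ has colour $z$, where $b$ = blue and $u$ = uncoloured. The suboperad generated by a set is the smallest suboperad containing it. *)

theory Defs
  imports Main
begin

text \<open>A BNC of size n: vertices 1..n+1; blue arcs and red arcs as sets of pairs (i,j), i<j.\<close>
datatype bnc = BNC (bsize: nat) (blue: "(nat \<times> nat) set") (red: "(nat \<times> nat) set")

definition arcs :: "nat \<Rightarrow> (nat \<times> nat) set" where
  "arcs n = {(i,j). 1 \<le> i \<and> i < j \<and> j \<le> n + 1}"

definition crossing :: "nat \<times> nat \<Rightarrow> nat \<times> nat \<Rightarrow> bool" where
  "crossing p q = (case p of (i,j) \<Rightarrow> case q of (k,l) \<Rightarrow>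
      (i < k \<and> k < j \<and> j < l) \<or> (k < i \<and> i < l \<and> l < j))"

definition is_diagonal :: "nat \<Rightarrow> nat \<times> nat \<Rightarrow> bool" where
  "is_diagonal n p = (p \<in> arcs n \<and> snd p \<noteq> fst p + 1 \<and> p \<noteq> (1, n + 1))"

definition bnc_unit :: bnc where
  "bnc_unit = BNC 1 {(1,2)} {}"

definition is_bnc :: "bnc \<Rightarrow> bool" where
  "is_bnc C = (if bsize C = 1 then C = bnc_unit else
     2 \<le> bsize C \<and> blue C \<subseteq> arcs (bsize C) \<and> red C \<subseteq> arcs (bsize C)
     \<and> blue C \<inter> red C = {}
     \<and> (\<forall>p\<in>red C. is_diagonal (bsize C) p)
     \<and> (\<forall>p\<in>blue C \<union> red C. \<forall>q\<in>blue C \<union> red C. \<not> crossing p q))"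

text \<open>Partial composition C \<circ>_i D: glue the base of D on the i-th edge of C.\<close>
definition bnc_comp :: "bnc \<Rightarrow> nat \<Rightarrow> bnc \<Rightarrow> bnc" where
  "bnc_comp C i D = (let m = bsize D; n = bsize C;
      \<sigma> = (\<lambda>v. if v \<le> i then v else v + m - 1);
      mapC = (\<lambda>A. {(\<sigma> a, \<sigma> b) | a b. (a,b) \<in> A \<and> (a,b) \<noteq> (i, i+1)});
      mapD = (\<lambda>A. {(a + i - 1, b + i - 1) | a b. (a,b) \<in> A \<and> (a,b) \<noteq> (1, m+1)});
      eb = ((i, i+1) \<in> blue C); bb = ((1, m+1) \<in> blue D)
    in BNC (n + m - 1)
       (mapC (blue C) \<union> mapD (blue D) \<union> (if eb \<and> bb then {(i, i+m)} else {}))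
       (mapC (red C) \<union> mapD (red D) \<union> (if \<not> eb \<and> \<not> bb then {(i, i+m)} else {})))"

text \<open>T_xyz with first edge (1,2), base (1,3), second edge (2,3).\<close>
definition s_bnc :: bnc where "s_bnc = BNC 2 {(1,3),(2,3)} {}"   (* T_ubb *)
definition w_bnc :: bnc where "w_bnc = BNC 2 {(1,2),(2,3)} {}"   (* T_bub *)

inductive_set gen_sub :: "bnc set" where
  unit: "bnc_unit \<in> gen_sub"
| gs: "s_bnc \<in> gen_sub"
| gw: "w_bnc \<in> gen_sub"
| comp: "C \<in> gen_sub \<Longrightarrow> D \<in> gen_sub \<Longrightarrow> 1 \<le> i \<Longrightarrow> i \<le> bsize C
          \<Longrightarrow> bnc_comp C i D \<in> gen_sub"

datatype gen = S | W

datatype tree = Leaf | Node gen tree tree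

fun arity :: "tree \<Rightarrow> nat" where
  "arity Leaf = 1"
| "arity (Node g l r) = arity l + arity r"

fun graft :: "tree \<Rightarrow> nat \<Rightarrow> tree \<Rightarrow> tree" where
  "graft Leaf i u = (if i = 1 then u else Leaf)"
| "graft (Node g l r) i u =
     (if i \<le> arity l then Node g (graft l i u) r else Node g l (graft r (i - arity l) u))"

definition gtree :: "gen \<Rightarrow> tree" where "gtree g = Node g Leaf Leaf"

inductive cong :: "tree \<Rightarrow> tree \<Rightarrow> bool" where
  rel1: "cong (graft (gtree W) 1 (gtree W)) (graft (gtree W) 2 (gtree W))"
| rel2: "cong (graft (gtree S) 1 (gtree S)) (graft (gtree S) 2 (gtree W))"
| refl: "cong t t"
| sym: "cong t u \<Longrightarrow> cong u t"
| trans: "cong t u \<Longrightarrow> cong u v \<Longrightarrow> cong t v"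
| compL: "cong t t' \<Longrightarrow> 1 \<le> i \<Longrightarrow> i \<le> arity t \<Longrightarrow> cong (graft t i u) (graft t' i u)"
| compR: "cong u u' \<Longrightarrow> 1 \<le> i \<Longrightarrow> i \<le> arity t \<Longrightarrow> cong (graft t i u) (graft t i u')"

fun gen_bnc :: "gen \<Rightarrow> bnc" where
  "gen_bnc S = s_bnc"
| "gen_bnc W = w_bnc"

fun eval :: "tree \<Rightarrow> bnc" where
  "eval Leaf = bnc_unit"
| "eval (Node g l r) = bnc_comp (bnc_comp (gen_bnc g) 2 (eval r)) 1 (eval l)"

end

theory Submission
  imports Defs
begin

text \<open>Orienting the two relations as \<open>w \<circ>\<^sub>1 w \<rightarrow> w \<circ>\<^sub>2 w\<close> and
\<open>s \<circ>\<^sub>1 s \<rightarrow> s \<circ>\<^sub>2 w\<close> rewrites every tree into a normal one, in which no left child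
carries the generator of its parent; since both relations hold in CNCB, it remains to show that
distinct normal trees have distinct images. The generator at the root is read off the colour of
the base, the arity of the left subtree off the longest blue (for \<open>w\<close>) or red (for \<open>s\<close>) arc
at the first vertex, and then both subtrees are recovered by restricting the configuration to
their vertices. The operad laws of CNCB and all these computations are carried out on arc sets
transported to the integers, where the index shifts of a partial composition are invertible.\<close>


section \<open>Gluing integer arc sets\<close>

definition stretch :: "int \<Rightarrow> int \<Rightarrow> int \<Rightarrow> int" where
  "stretch i m v = (if v \<le> i then v else v + m - 1)"

text \<open>The integer counterpart of \<open>bnc_comp\<close> for one colour; the flag \<open>c\<close> says whether
the arc \<open>(i, i + m)\<close> created by the gluing has that colour.\<close>

definition glue :: "(int \<times> int) set \<Rightarrow> int \<Rightarrow> (int \<times> int) set \<Rightarrow> int \<Rightarrow> bool \<Rightarrow> (int \<times> int) set" where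
  "glue A i B m c =
     (\<lambda>(a, b). (stretch i m a, stretch i m b)) ` (A - {(i, i + 1)})
   \<union> (\<lambda>(a, b). (a + i - 1, b + i - 1)) ` (B - {(1, m + 1)})
   \<union> (if c then {(i, i + m)} else {})"

definition box :: "int \<Rightarrow> (int \<times> int) set" where
  "box n = {(a, b). 1 \<le> a \<and> a < b \<and> b \<le> n + 1}"

definition diagonals :: "int \<Rightarrow> (int \<times> int) set" where
  "diagonals n = {(a, b) \<in> box n. b \<noteq> a + 1 \<and> (a, b) \<noteq> (1, n + 1)}"

lemma mem_glue:
  assumes "1 \<le> m"
  shows "(x, y) \<in> glue A i B m c \<longleftrightarrow>
      (x \<le> i \<or> i + m \<le> x) \<and> (y \<le> i \<or> i + m \<le> y)
        \<and> (if x \<le> i then x else x + 1 - m, if y \<le> i then y else y + 1 - m) \<in> A - {(i, i + 1)}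
    \<or> (x + 1 - i, y + 1 - i) \<in> B - {(1, m + 1)}
    \<or> c \<and> x = i \<and> y = i + m"
proof -
  have stretch_eq: "(x, y) = (stretch i m a, stretch i m b) \<longleftrightarrow>
      (x \<le> i \<or> i + m \<le> x) \<and> (y \<le> i \<or> i + m \<le> y)
      \<and> (a, b) = (if x \<le> i then x else x + 1 - m, if y \<le> i then y else y + 1 - m)" for a b
    using assms by (auto simp: stretch_def)
  have "(x, y) \<in> (\<lambda>(a, b). (stretch i m a, stretch i m b)) ` (A - {(i, i + 1)}) \<longleftrightarrow>
      (x \<le> i \<or> i + m \<le> x) \<and> (y \<le> i \<or> i + m \<le> y)
        \<and> (if x \<le> i then x else x + 1 - m, if y \<le> i then y else y + 1 - m) \<in> A - {(i, i + 1)}"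
    unfolding image_def by (simp only: mem_Collect_eq Bex_def split_paired_Ex prod.case stretch_eq) blast
  moreover have "(x, y) \<in> (\<lambda>(a, b). (a + i - 1, b + i - 1)) ` (B - {(1, m + 1)}) \<longleftrightarrow>
      (x + 1 - i, y + 1 - i) \<in> B - {(1, m + 1)}"
    by (force simp: image_iff)
  ultimately show ?thesis by (simp add: glue_def)
qed

lemma glueE:
  assumes "(x, y) \<in> glue A i B m c"
  obtains a b where "(a, b) \<in> A" "(a, b) \<noteq> (i, i + 1)" "x = stretch i m a" "y = stretch i m b"
    | a b where "(a, b) \<in> B" "(a, b) \<noteq> (1, m + 1)" "x = a + i - 1" "y = b + i - 1"
    | "c" "x = i" "y = i + m"
  using assms unfolding glue_def by (auto split: if_splits)

lemma int_split_at_cuts: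
  fixes a b c x :: int
  assumes "a \<le> b" "b \<le> c"
  obtains "x < a" | "x = a" | "a < x" "x < b" | "x = b" | "b < x" "x < c" | "x = c" | "c < x"
  using assms by linarith

text \<open>Both associativity laws need \<open>2 \<le> m\<close> and \<open>2 \<le> l\<close>: if a glued configuration is the
unit, its only edge is itself the arc created by the gluing, and the two sides give it different
colours. Units are dealt with on the level of configurations.\<close>

lemma glue_assoc_seq:
  assumes "A \<subseteq> box n" "B \<subseteq> box m" "E \<subseteq> box l"
    and "1 \<le> i" "i \<le> n" "1 \<le> k" "k \<le> m" "2 \<le> m" "2 \<le> l"
  shows "glue (glue A i B m c) (i + k - 1) E l d = glue A i (glue B k E l d) (m + l - 1) c"
proof -
  have cuts: "i \<le> i + k - 1" "i + k - 1 \<le> i + k - 1 + l"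
    using assms by auto
  have boxed: "A = A \<inter> box n" "B = B \<inter> box m" "E = E \<inter> box l"
    using assms(1-3) by auto
  show ?thesis
  proof (rule set_eqI, clarify)
    fix x y
    show "(x, y) \<in> glue (glue A i B m c) (i + k - 1) E l d \<longleftrightarrow> (x, y) \<in> glue A i (glue B k E l d) (m + l - 1) c"
      using assms(4-)
      apply (subst (1 2) boxed(1); subst (1 2) boxed(2); subst (1 2) boxed(3))
      apply (cases x rule: int_split_at_cuts[OF cuts]; cases y rule: int_split_at_cuts[OF cuts])
      apply (simp_all add: mem_glue box_def algebra_simps)
      apply auto
      done
  qed
qed

lemma glue_assoc_par:
  assumes "A \<subseteq> box n" "B \<subseteq> box m" "E \<subseteq> box l"
    and "1 \<le> i" "i < j" "j \<le> n" "2 \<le> m" "2 \<le> l"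
  shows "glue (glue A i B m c) (j + m - 1) E l d = glue (glue A j E l d) i B m c"
proof -
  have cuts: "i \<le> j + m - 1" "j + m - 1 \<le> j + m - 1 + l"
    using assms by auto
  have boxed: "A = A \<inter> box n" "B = B \<inter> box m" "E = E \<inter> box l"
    using assms(1-3) by auto
  show ?thesis
  proof (rule set_eqI, clarify)
    fix x y
    show "(x, y) \<in> glue (glue A i B m c) (j + m - 1) E l d \<longleftrightarrow> (x, y) \<in> glue (glue A j E l d) i B m c"
      using assms(4-)
      apply (subst (1 2) boxed(1); subst (1 2) boxed(2); subst (1 2) boxed(3))
      apply (cases x rule: int_split_at_cuts[OF cuts]; cases y rule: int_split_at_cuts[OF cuts])
      by (simp_all add: mem_glue box_def algebra_simps)
  qed
qed

lemma glue_subset_box: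
  assumes "A \<subseteq> box n" "B \<subseteq> box m" "1 \<le> i" "i \<le> n" "1 \<le> m"
  shows "glue A i B m c \<subseteq> box (n + m - 1)"
proof clarify
  fix x y assume "(x, y) \<in> glue A i B m c"
  then show "(x, y) \<in> box (n + m - 1)"
    by (cases rule: glueE) (use assms in \<open>auto simp: box_def stretch_def\<close>)
qed

lemma glue_subset_diagonals:
  assumes "A \<subseteq> diagonals n" "B \<subseteq> diagonals m" "1 \<le> i" "i \<le> n" "1 \<le> m"
    and "c \<Longrightarrow> 2 \<le> n \<and> 2 \<le> m"
  shows "glue A i B m c \<subseteq> diagonals (n + m - 1)"
proof clarify
  fix x y assume "(x, y) \<in> glue A i B m c"
  then show "(x, y) \<in> diagonals (n + m - 1)"
    by (cases rule: glueE) (use assms in \<open>auto simp: diagonals_def box_def stretch_def\<close>)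
qed

lemma glue_unit_right:
  assumes "B \<subseteq> {(1, 2)}"
  shows "glue A i B 1 c = A - {(i, i + 1)} \<union> (if c then {(i, i + 1)} else {})"
  using assms by (auto simp: set_eq_iff mem_glue)

lemma glue_unit_left:
  assumes "A \<subseteq> {(1, 2)}"
  shows "glue A 1 B m c = B - {(1, m + 1)} \<union> (if c then {(1, m + 1)} else {})"
  using assms by (auto simp: glue_def image_def add.commute)

definition shift :: "int \<Rightarrow> (int \<times> int) set \<Rightarrow> (int \<times> int) set" where
  "shift p A = (\<lambda>(a, b). (a + p, b + p)) ` A"

lemma mem_shift: "(x, y) \<in> shift p A \<longleftrightarrow> (x - p, y - p) \<in> A"
  by (force simp: shift_def)

lemma glue_binary:
  assumes "T \<subseteq> box 2" "A \<subseteq> box p" "B \<subseteq> box q" "1 \<le> p" "1 \<le> q"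
  shows "glue (glue T 2 B q c) 1 A p d =
    A - {(1, p + 1)} \<union> shift p (B - {(1, q + 1)})
    \<union> (if c then {(p + 1, p + q + 1)} else {}) \<union> (if d then {(1, p + 1)} else {})
    \<union> (if (1, 3) \<in> T then {(1, p + q + 1)} else {})"
proof -
  have cuts: "1 \<le> p + 1" "p + 1 \<le> p + q + 1" using assms by auto
  have boxed: "T = T \<inter> box 2" "A = A \<inter> box p" "B = B \<inter> box q"
    using assms(1-3) by auto
  show ?thesis
  proof (rule set_eqI, clarify)
    fix x y
    show "(x, y) \<in> glue (glue T 2 B q c) 1 A p d \<longleftrightarrow> (x, y) \<in> A - {(1, p + 1)} \<union> shift p (B - {(1, q + 1)})
      \<union> (if c then {(p + 1, p + q + 1)} else {}) \<union> (if d then {(1, p + 1)} else {})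
      \<union> (if (1, 3) \<in> T then {(1, p + q + 1)} else {})"
      using assms(4,5)
      apply (subst (1 2) boxed(1); subst (1 2) boxed(2); subst (1 2) boxed(3))
      apply (cases x rule: int_split_at_cuts[OF cuts]; cases y rule: int_split_at_cuts[OF cuts])
      by (simp_all add: mem_glue mem_shift box_def algebra_simps)
  qed
qed

section \<open>Arc sets of configurations as integer arc sets\<close>

definition int_arcs :: "(nat \<times> nat) set \<Rightarrow> (int \<times> int) set" where
  "int_arcs A = map_prod int int ` A"

lemma mem_int_arcs [simp]: "(int a, int b) \<in> int_arcs A \<longleftrightarrow> (a, b) \<in> A"
  by (auto simp: int_arcs_def)

lemma in_int_arcs_iff: "(x, y) \<in> int_arcs A \<longleftrightarrow> 0 \<le> x \<and> 0 \<le> y \<and> (nat x, nat y) \<in> A"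
  by (auto simp: int_arcs_def image_iff intro!: bexI[of _ "(nat x, nat y)"])

lemma int_arcs_inject: "int_arcs A = int_arcs B \<longleftrightarrow> A = B"
  by (metis mem_int_arcs set_eqI surj_pair)

lemma int_arcs_empty [simp]: "int_arcs {} = {}"
  and int_arcs_insert [simp]: "int_arcs (insert (a, b) A) = insert (int a, int b) (int_arcs A)"
  by (simp_all add: int_arcs_def)

lemma int_arcs_Un: "int_arcs (A \<union> B) = int_arcs A \<union> int_arcs B"
  by (simp add: int_arcs_def image_Un)

lemma int_arcs_diff_singleton: "int_arcs (A - {(a, b)}) = int_arcs A - {(int a, int b)}"
  by (simp add: int_arcs_def image_set_diff inj_on_def)

lemma int_arcs_image:
  assumes "\<And>a b. (a, b) \<in> A \<Longrightarrow> map_prod int int (f (a, b)) = g (int a, int b)"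
  shows "int_arcs (f ` A) = g ` int_arcs A"
proof -
  have "map_prod int int ` f ` A = g ` map_prod int int ` A"
    unfolding image_image using assms by (force intro: image_cong)
  then show ?thesis by (simp add: int_arcs_def)
qed

lemma int_arcs_subset_iff: "int_arcs A \<subseteq> X \<longleftrightarrow> (\<forall>(a, b)\<in>A. (int a, int b) \<in> X)"
  by (auto simp: int_arcs_def)

lemma int_pair_in_box_iff: "(int a, int b) \<in> box (int n) \<longleftrightarrow> (a, b) \<in> arcs n"
  by (auto simp: box_def arcs_def)

lemma int_pair_in_diagonals_iff: "(int a, int b) \<in> diagonals (int n) \<longleftrightarrow> is_diagonal n (a, b)"
  by (auto simp: diagonals_def is_diagonal_def int_pair_in_box_iff)

lemma int_arcs_subset_box_iff: "int_arcs A \<subseteq> box (int n) \<longleftrightarrow> A \<subseteq> arcs n"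
  by (auto simp: int_arcs_subset_iff int_pair_in_box_iff)

lemma int_arcs_subset_diagonals_iff: "int_arcs A \<subseteq> diagonals (int n) \<longleftrightarrow> (\<forall>p\<in>A. is_diagonal n p)"
  by (auto simp: int_arcs_subset_iff int_pair_in_diagonals_iff)

lemma Collect_pairs_eq_image: "{f a b | a b. (a, b) \<in> A \<and> (a, b) \<noteq> p} = (\<lambda>(a, b). f a b) ` (A - {p})"
  by (auto simp: image_def intro!: bexI[of _ "(a, b)" for a b])

lemma int_arcs_graft:
  assumes "1 \<le> i" "1 \<le> m"
  shows "int_arcs ({(if a \<le> i then a else a + m - 1, if b \<le> i then b else b + m - 1) | a b. (a, b) \<in> A \<and> (a, b) \<noteq> (i, i + 1)}
      \<union> {(a + i - 1, b + i - 1) | a b. (a, b) \<in> B \<and> (a, b) \<noteq> (1, m + 1)}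
      \<union> (if c then {(i, i + m)} else {}))
    = glue (int_arcs A) (int i) (int_arcs B) (int m) c"
proof -
  let ?stretch = "\<lambda>v. if v \<le> i then v else v + m - 1"
  have outer: "int_arcs ((\<lambda>(a, b). (?stretch a, ?stretch b)) ` (A - {(i, i + 1)}))
      = (\<lambda>(a, b). (stretch (int i) (int m) a, stretch (int i) (int m) b)) ` int_arcs (A - {(i, i + 1)})"
    by (rule int_arcs_image) (use assms(2) in \<open>auto simp: stretch_def\<close>)
  have inner: "int_arcs ((\<lambda>(a, b). (a + i - 1, b + i - 1)) ` (B - {(1, m + 1)}))
      = (\<lambda>(a, b). (a + int i - 1, b + int i - 1)) ` int_arcs (B - {(1, m + 1)})"
    by (rule int_arcs_image) (use assms(1) in auto)
  have new: "int_arcs (if c then {(i, i + m)} else {}) = (if c then {(int i, int i + int m)} else {})"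
    by (simp add: int_arcs_def)
  show ?thesis
    unfolding Collect_pairs_eq_image int_arcs_Un outer inner new int_arcs_diff_singleton glue_def
    by (simp add: add.commute)
qed

lemma bsize_bnc_comp [simp]: "bsize (bnc_comp C i D) = bsize C + bsize D - 1"
  by (simp add: bnc_comp_def Let_def)

lemma blue_bnc_comp:
  assumes "1 \<le> i" "1 \<le> bsize D"
  shows "int_arcs (blue (bnc_comp C i D)) = glue (int_arcs (blue C)) (int i) (int_arcs (blue D)) (int (bsize D))
    ((i, i + 1) \<in> blue C \<and> (1, bsize D + 1) \<in> blue D)"
  unfolding bnc_comp_def Let_def bnc.sel by (rule int_arcs_graft[OF assms])

lemma red_bnc_comp:
  assumes "1 \<le> i" "1 \<le> bsize D"
  shows "int_arcs (red (bnc_comp C i D)) = glue (int_arcs (red C)) (int i) (int_arcs (red D)) (int (bsize D))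
    ((i, i + 1) \<notin> blue C \<and> (1, bsize D + 1) \<notin> blue D)"
  unfolding bnc_comp_def Let_def bnc.sel by (rule int_arcs_graft[OF assms])

lemma mem_blue_bnc_comp:
  assumes "1 \<le> i" "1 \<le> bsize D"
  shows "(a, b) \<in> blue (bnc_comp C i D) \<longleftrightarrow>
    (int a, int b) \<in> glue (int_arcs (blue C)) (int i) (int_arcs (blue D)) (int (bsize D))
      ((i, i + 1) \<in> blue C \<and> (1, bsize D + 1) \<in> blue D)"
  by (simp only: mem_int_arcs[symmetric] blue_bnc_comp[OF assms])

lemma bnc_eq_int_arcsI:
  assumes "bsize C = bsize D" "int_arcs (blue C) = int_arcs (blue D)" "int_arcs (red C) = int_arcs (red D)"
  shows "C = D"
  using assms by (cases C; cases D) (simp add: int_arcs_inject)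

section \<open>Operad laws of CNCB\<close>

text \<open>Weaker than \<open>is_bnc\<close>, which also asks for noncrossing arcs, but closed under
composition and all that the operad laws need.\<close>

definition bnc_wf :: "bnc \<Rightarrow> bool" where
  "bnc_wf C \<longleftrightarrow> (bsize C = 1 \<longrightarrow> C = bnc_unit) \<and> 1 \<le> bsize C
     \<and> blue C \<subseteq> arcs (bsize C) \<and> (\<forall>p\<in>red C. is_diagonal (bsize C) p)"

lemma bnc_wf_unit: "bnc_wf bnc_unit"
  by (simp add: bnc_wf_def bnc_unit_def arcs_def)

lemma bnc_wfD:
  assumes "bnc_wf C"
  shows "1 \<le> bsize C" "bsize C = 1 \<Longrightarrow> C = bnc_unit"
    and "int_arcs (blue C) \<subseteq> box (int (bsize C))" "int_arcs (red C) \<subseteq> diagonals (int (bsize C))"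
  using assms unfolding bnc_wf_def int_arcs_subset_box_iff int_arcs_subset_diagonals_iff by blast+

lemma bnc_wf_blueD:
  assumes "bnc_wf C" "(a, b) \<in> blue C"
  shows "1 \<le> a \<and> a < b \<and> b \<le> bsize C + 1"
  using assms by (auto simp: bnc_wf_def arcs_def)

lemma bnc_wf_size_1_blue:
  assumes "bnc_wf C" "bsize C = 1"
  shows "blue C = {(1, 2)}"
  using bnc_wfD(2)[OF assms] by (simp add: bnc_unit_def)

lemma bnc_comp_unit_unit: "bnc_comp bnc_unit 1 bnc_unit = bnc_unit"
  by (auto simp: bnc_comp_def bnc_unit_def Let_def)

lemma bnc_wf_comp:
  assumes C: "bnc_wf C" and D: "bnc_wf D" and i: "1 \<le> i" "i \<le> bsize C"
  shows "bnc_wf (bnc_comp C i D)"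
proof -
  let ?n = "bsize C" and ?m = "bsize D"
  note wfC = bnc_wfD[OF C] and wfD = bnc_wfD[OF D]
  have size: "int (bsize (bnc_comp C i D)) = int ?n + int ?m - 1"
    using wfD(1) by simp
  have unit: "bnc_comp C i D = bnc_unit" if "bsize (bnc_comp C i D) = 1"
  proof -
    have "?n = 1" "?m = 1" using that wfC(1) wfD(1) by simp_all
    moreover from this have "i = 1" using i by simp
    ultimately show ?thesis using wfC(2) wfD(2) bnc_comp_unit_unit by simp
  qed
  have "blue (bnc_comp C i D) \<subseteq> arcs (bsize (bnc_comp C i D))"
    unfolding int_arcs_subset_box_iff[symmetric] size blue_bnc_comp[OF i(1) wfD(1)]
    by (rule glue_subset_box[OF wfC(3) wfD(3)]) (use i wfD(1) in simp_all)
  moreover have "\<forall>p\<in>red (bnc_comp C i D). is_diagonal (bsize (bnc_comp C i D)) p"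
    unfolding int_arcs_subset_diagonals_iff[symmetric] size red_bnc_comp[OF i(1) wfD(1)]
  proof (rule glue_subset_diagonals[OF wfC(4) wfD(4)])
    assume "(i, i + 1) \<notin> blue C \<and> (1, ?m + 1) \<notin> blue D"
    then show "2 \<le> int ?n \<and> 2 \<le> int ?m"
      using bnc_wf_size_1_blue[OF C] bnc_wf_size_1_blue[OF D] wfC(1) wfD(1) i
      by (cases "?n = 1"; cases "?m = 1") auto
  qed (use i wfD(1) in simp_all)
  moreover have "1 \<le> bsize (bnc_comp C i D)"
    using size wfC(1) wfD(1) by linarith
  ultimately show ?thesis
    unfolding bnc_wf_def using unit by blast
qed

lemma bnc_comp_unit_right:
  assumes C: "bnc_wf C" and i: "1 \<le> i" "i \<le> bsize C"
  shows "bnc_comp C i bnc_unit = C"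
proof (rule bnc_eq_int_arcsI)
  have "(int i, int i + 1) \<notin> int_arcs (red C)"
    using bnc_wfD(4)[OF C] by (auto simp: diagonals_def)
  then show "int_arcs (red (bnc_comp C i bnc_unit)) = int_arcs (red C)"
    using i by (simp add: red_bnc_comp glue_unit_right bnc_unit_def)
  show "int_arcs (blue (bnc_comp C i bnc_unit)) = int_arcs (blue C)"
    using i by (auto simp: blue_bnc_comp glue_unit_right bnc_unit_def add.commute simp flip: mem_int_arcs)
qed (simp add: bnc_unit_def)

lemma bnc_comp_unit_left:
  assumes D: "bnc_wf D"
  shows "bnc_comp bnc_unit 1 D = D"
proof (rule bnc_eq_int_arcsI)
  have "(1, int (bsize D) + 1) \<notin> int_arcs (red D)"
    using bnc_wfD(4)[OF D] by (auto simp: diagonals_def)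
  then show "int_arcs (red (bnc_comp bnc_unit 1 D)) = int_arcs (red D)"
    using bnc_wfD(1)[OF D] by (simp add: red_bnc_comp glue_unit_left bnc_unit_def)
  show "int_arcs (blue (bnc_comp bnc_unit 1 D)) = int_arcs (blue D)"
    using bnc_wfD(1)[OF D] by (auto simp: blue_bnc_comp glue_unit_left bnc_unit_def add.commute simp flip: mem_int_arcs)
qed (simp add: bnc_unit_def)

lemma blue_edge_bnc_comp_inner:
  assumes "1 \<le> i" "1 \<le> k" "k \<le> bsize D" "2 \<le> bsize D"
  shows "(i + k - 1, i + k) \<in> blue (bnc_comp C i D) \<longleftrightarrow> (k, k + 1) \<in> blue D"
  using assms unfolding mem_blue_bnc_comp[OF assms(1) order_trans[OF assms(2,3)]]
  by (auto simp: mem_glue in_int_arcs_iff nat_add_distrib of_nat_diff)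

lemma blue_edge_bnc_comp_before:
  assumes "bnc_wf D" "j < i"
  shows "(j, j + 1) \<in> blue (bnc_comp C i D) \<longleftrightarrow> (j, j + 1) \<in> blue C"
proof -
  have "1 \<le> i" using assms(2) by simp
  then show ?thesis
    using bnc_wfD(1)[OF assms(1)] assms(2) unfolding mem_blue_bnc_comp[OF \<open>1 \<le> i\<close> bnc_wfD(1)[OF assms(1)]]
    by (auto simp: mem_glue in_int_arcs_iff nat_add_distrib dest: bnc_wf_blueD[OF assms(1)])
qed

lemma blue_edge_bnc_comp_after:
  assumes "bnc_wf D" "1 \<le> i" "i < j"
  shows "(j + bsize D - 1, j + bsize D) \<in> blue (bnc_comp C i D) \<longleftrightarrow> (j, j + 1) \<in> blue C"
  using bnc_wfD(1)[OF assms(1)] assms(3) unfolding mem_blue_bnc_comp[OF assms(2) bnc_wfD(1)[OF assms(1)]]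
  by (auto simp: mem_glue in_int_arcs_iff nat_add_distrib of_nat_diff dest: bnc_wf_blueD[OF assms(1)])

lemma blue_base_bnc_comp:
  assumes "bnc_wf D" "1 \<le> i" "i \<le> bsize C" "2 \<le> bsize C"
  shows "(1, bsize C + bsize D) \<in> blue (bnc_comp C i D) \<longleftrightarrow> (1, bsize C + 1) \<in> blue C"
  using bnc_wfD(1)[OF assms(1)] assms(2-4) unfolding mem_blue_bnc_comp[OF assms(2) bnc_wfD(1)[OF assms(1)]]
  by (auto simp: mem_glue in_int_arcs_iff nat_add_distrib dest: bnc_wf_blueD[OF assms(1)])

lemma bnc_comp_assoc_seq_proper:
  assumes C: "bnc_wf C" and D: "bnc_wf D" and E: "bnc_wf E"
    and i: "1 \<le> i" "i \<le> bsize C" and k: "1 \<le> k" "k \<le> bsize D"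
    and m: "2 \<le> bsize D" and l: "2 \<le> bsize E"
  shows "bnc_comp (bnc_comp C i D) (i + k - 1) E = bnc_comp C i (bnc_comp D k E)"
proof (rule bnc_eq_int_arcsI)
  let ?m = "bsize D" and ?l = "bsize E"
  have sizes: "1 \<le> bsize C" "1 \<le> ?m" "1 \<le> ?l" using i m l by auto
  have ik: "1 \<le> i + k - 1" "int (i + k - 1) = int i + int k - 1" using i k by auto
  have mk: "1 \<le> bsize (bnc_comp D k E)" "int (bsize (bnc_comp D k E)) = int ?m + int ?l - 1"
    using m l by simp_all
  have edge: "(i + k - 1, i + k - 1 + 1) \<in> blue (bnc_comp C i D) \<longleftrightarrow> (k, k + 1) \<in> blue D"
    using blue_edge_bnc_comp_inner[OF i(1) k m] i k by simp
  have base: "(1, bsize (bnc_comp D k E) + 1) \<in> blue (bnc_comp D k E) \<longleftrightarrow> (1, ?m + 1) \<in> blue D"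
    using blue_base_bnc_comp[OF E k m] m l by simp
  have boxes: "int_arcs (blue C) \<subseteq> box (int (bsize C))" "int_arcs (blue D) \<subseteq> box (int ?m)"
    "int_arcs (blue E) \<subseteq> box (int ?l)" "int_arcs (red C) \<subseteq> box (int (bsize C))"
    "int_arcs (red D) \<subseteq> box (int ?m)" "int_arcs (red E) \<subseteq> box (int ?l)"
    using bnc_wfD(3,4)[OF C] bnc_wfD(3,4)[OF D] bnc_wfD(3,4)[OF E] by (auto simp: diagonals_def)
  have ints: "1 \<le> int i" "int i \<le> int (bsize C)" "1 \<le> int k" "int k \<le> int ?m" "2 \<le> int ?m" "2 \<le> int ?l"
    using i k m l by auto
  show "int_arcs (blue (bnc_comp (bnc_comp C i D) (i + k - 1) E)) = int_arcs (blue (bnc_comp C i (bnc_comp D k E)))"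
    unfolding blue_bnc_comp[OF ik(1) sizes(3)] blue_bnc_comp[OF i(1) sizes(2)]
      blue_bnc_comp[OF k(1) sizes(3)] blue_bnc_comp[OF i(1) mk(1)] ik(2) mk(2) edge base
    by (rule glue_assoc_seq[OF boxes(1-3) ints])
  show "int_arcs (red (bnc_comp (bnc_comp C i D) (i + k - 1) E)) = int_arcs (red (bnc_comp C i (bnc_comp D k E)))"
    unfolding red_bnc_comp[OF ik(1) sizes(3)] red_bnc_comp[OF i(1) sizes(2)]
      red_bnc_comp[OF k(1) sizes(3)] red_bnc_comp[OF i(1) mk(1)] ik(2) mk(2) edge base
    by (rule glue_assoc_seq[OF boxes(4-6) ints])
qed (use m in simp)

lemma bnc_comp_assoc_par_proper:
  assumes C: "bnc_wf C" and D: "bnc_wf D" and E: "bnc_wf E"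
    and ij: "1 \<le> i" "i < j" "j \<le> bsize C"
    and m: "2 \<le> bsize D" and l: "2 \<le> bsize E"
  shows "bnc_comp (bnc_comp C i D) (j + bsize D - 1) E = bnc_comp (bnc_comp C j E) i D"
proof (rule bnc_eq_int_arcsI)
  let ?m = "bsize D" and ?l = "bsize E"
  have sizes: "1 \<le> ?m" "1 \<le> ?l" using m l by auto
  have jm: "1 \<le> j + ?m - 1" "int (j + ?m - 1) = int j + int ?m - 1" "1 \<le> j" using ij m by auto
  have edge_after: "(j + ?m - 1, j + ?m - 1 + 1) \<in> blue (bnc_comp C i D) \<longleftrightarrow> (j, j + 1) \<in> blue C"
    using blue_edge_bnc_comp_after[OF D ij(1,2)] m by simp
  have edge_before: "(i, i + 1) \<in> blue (bnc_comp C j E) \<longleftrightarrow> (i, i + 1) \<in> blue C"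
    by (rule blue_edge_bnc_comp_before[OF E ij(2)])
  have boxes: "int_arcs (blue C) \<subseteq> box (int (bsize C))" "int_arcs (blue D) \<subseteq> box (int ?m)"
    "int_arcs (blue E) \<subseteq> box (int ?l)" "int_arcs (red C) \<subseteq> box (int (bsize C))"
    "int_arcs (red D) \<subseteq> box (int ?m)" "int_arcs (red E) \<subseteq> box (int ?l)"
    using bnc_wfD(3,4)[OF C] bnc_wfD(3,4)[OF D] bnc_wfD(3,4)[OF E] by (auto simp: diagonals_def)
  have ints: "1 \<le> int i" "int i < int j" "int j \<le> int (bsize C)" "2 \<le> int ?m" "2 \<le> int ?l"
    using ij m l by auto
  show "int_arcs (blue (bnc_comp (bnc_comp C i D) (j + ?m - 1) E)) = int_arcs (blue (bnc_comp (bnc_comp C j E) i D))"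
    unfolding blue_bnc_comp[OF jm(1) sizes(2)] blue_bnc_comp[OF ij(1) sizes(1)]
      blue_bnc_comp[OF jm(3) sizes(2)] jm(2) edge_after edge_before
    by (rule glue_assoc_par[OF boxes(1-3) ints])
  show "int_arcs (red (bnc_comp (bnc_comp C i D) (j + ?m - 1) E)) = int_arcs (red (bnc_comp (bnc_comp C j E) i D))"
    unfolding red_bnc_comp[OF jm(1) sizes(2)] red_bnc_comp[OF ij(1) sizes(1)]
      red_bnc_comp[OF jm(3) sizes(2)] jm(2) edge_after edge_before
    by (rule glue_assoc_par[OF boxes(4-6) ints])
qed (use m l in simp)

lemma bnc_comp_assoc_seq:
  assumes C: "bnc_wf C" and D: "bnc_wf D" and E: "bnc_wf E"
    and i: "1 \<le> i" "i \<le> bsize C" and k: "1 \<le> k" "k \<le> bsize D"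
  shows "bnc_comp (bnc_comp C i D) (i + k - 1) E = bnc_comp C i (bnc_comp D k E)"
proof -
  consider "bsize D = 1" | "bsize E = 1" | "2 \<le> bsize D" "2 \<le> bsize E"
    using bnc_wfD(1)[OF D] bnc_wfD(1)[OF E] by linarith
  then show ?thesis
  proof cases
    case 1
    then have "D = bnc_unit" "k = 1" using bnc_wfD(2)[OF D] k by auto
    then show ?thesis using bnc_comp_unit_right[OF C i] bnc_comp_unit_left[OF E] by simp
  next
    case 2
    then have "E = bnc_unit" using bnc_wfD(2)[OF E] by simp
    moreover have "bnc_comp (bnc_comp C i D) (i + k - 1) bnc_unit = bnc_comp C i D"
      by (rule bnc_comp_unit_right) (use bnc_wf_comp[OF C D i] i k in auto)
    ultimately show ?thesis using bnc_comp_unit_right[OF D k] by simp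
  next
    case 3
    then show ?thesis using bnc_comp_assoc_seq_proper[OF C D E i k] by simp
  qed
qed

lemma bnc_comp_assoc_par:
  assumes C: "bnc_wf C" and D: "bnc_wf D" and E: "bnc_wf E"
    and ij: "1 \<le> i" "i < j" "j \<le> bsize C"
  shows "bnc_comp (bnc_comp C i D) (j + bsize D - 1) E = bnc_comp (bnc_comp C j E) i D"
proof -
  consider "bsize D = 1" | "bsize E = 1" | "2 \<le> bsize D" "2 \<le> bsize E"
    using bnc_wfD(1)[OF D] bnc_wfD(1)[OF E] by linarith
  then show ?thesis
  proof cases
    case 1
    then have "D = bnc_unit" using bnc_wfD(2)[OF D] by simp
    moreover have "bnc_comp (bnc_comp C j E) i bnc_unit = bnc_comp C j E"
      by (rule bnc_comp_unit_right) (use bnc_wf_comp[OF C E] bnc_wfD(1)[OF E] ij in auto)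
    ultimately show ?thesis using bnc_comp_unit_right[OF C] ij 1 by simp
  next
    case 2
    then have "E = bnc_unit" using bnc_wfD(2)[OF E] by simp
    moreover have "bnc_comp (bnc_comp C i D) (j + bsize D - 1) bnc_unit = bnc_comp C i D"
      by (rule bnc_comp_unit_right) (use bnc_wf_comp[OF C D] bnc_wfD(1)[OF D] ij in auto)
    ultimately show ?thesis using bnc_comp_unit_right[OF C] ij by simp
  next
    case 3
    then show ?thesis using bnc_comp_assoc_par_proper[OF C D E ij] by simp
  qed
qed

section \<open>The evaluation morphism\<close>

lemma arity_pos: "1 \<le> arity t"
  by (induction t) auto

lemma arity_gtree [simp]: "arity (gtree g) = 2"
  by (simp add: gtree_def)

lemma bnc_wf_gen: "bnc_wf (gen_bnc g)" and bsize_gen: "bsize (gen_bnc g) = 2"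
  by (cases g; simp add: bnc_wf_def s_bnc_def w_bnc_def arcs_def)+

lemma bnc_wf_eval: "bnc_wf (eval t)" and bsize_eval [simp]: "bsize (eval t) = arity t"
proof (induction t)
  case Leaf
  show "bnc_wf (eval Leaf)" by (simp add: bnc_wf_unit)
  show "bsize (eval Leaf) = arity Leaf" by (simp add: bnc_unit_def)
next
  case (Node g l r)
  have "bnc_wf (bnc_comp (gen_bnc g) 2 (eval r))"
    by (rule bnc_wf_comp) (use bnc_wf_gen bsize_gen Node in auto)
  then show "bnc_wf (eval (Node g l r))"
    by (simp add: bnc_wf_comp Node bsize_gen arity_pos)
  show "bsize (eval (Node g l r)) = arity (Node g l r)"
    using Node arity_pos[of l] arity_pos[of r] by (simp add: bsize_gen)
qed

lemma eval_graft: "1 \<le> i \<Longrightarrow> i \<le> arity t \<Longrightarrow> eval (graft t i u) = bnc_comp (eval t) i (eval u)"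
proof (induction t arbitrary: i)
  case Leaf
  then show ?case using bnc_comp_unit_left[OF bnc_wf_eval] by simp
next
  case (Node g l r)
  let ?G = "gen_bnc g" and ?L = "eval l" and ?R = "eval r" and ?U = "eval u"
  let ?p = "arity l" and ?q = "arity r"
  have GR: "bnc_wf (bnc_comp ?G 2 ?R)" by (rule bnc_wf_comp) (use bnc_wf_gen bsize_gen bnc_wf_eval in auto)
  have size_GR: "bsize (bnc_comp ?G 2 ?R) = ?q + 1" using bsize_gen arity_pos[of r] by simp
  show ?case
  proof (cases "i \<le> ?p")
    case True
    have "eval (graft (Node g l r) i u) = bnc_comp (bnc_comp ?G 2 ?R) 1 (bnc_comp ?L i ?U)"
      using True Node.IH(1)[of i] Node.prems by simp
    also have "\<dots> = bnc_comp (bnc_comp (bnc_comp ?G 2 ?R) 1 ?L) (1 + i - 1) ?U"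
      by (rule bnc_comp_assoc_seq[symmetric, OF GR bnc_wf_eval bnc_wf_eval]) (use True Node.prems size_GR in auto)
    finally show ?thesis by simp
  next
    case False
    have i: "1 \<le> i - ?p" "i - ?p \<le> ?q" using False Node.prems by auto
    have "eval (graft (Node g l r) i u) = bnc_comp (bnc_comp ?G 2 (bnc_comp ?R (i - ?p) ?U)) 1 ?L"
      using False Node.IH(2)[OF i] by simp
    also have "bnc_comp ?G 2 (bnc_comp ?R (i - ?p) ?U) = bnc_comp (bnc_comp ?G 2 ?R) (2 + (i - ?p) - 1) ?U"
      by (rule bnc_comp_assoc_seq[symmetric, OF bnc_wf_gen bnc_wf_eval bnc_wf_eval]) (use i bsize_gen in auto)
    also have "bnc_comp (bnc_comp (bnc_comp ?G 2 ?R) (2 + (i - ?p) - 1) ?U) 1 ?L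
        = bnc_comp (bnc_comp (bnc_comp ?G 2 ?R) 1 ?L) (2 + (i - ?p) - 1 + bsize ?L - 1) ?U"
      by (rule bnc_comp_assoc_par[symmetric, OF GR bnc_wf_eval bnc_wf_eval]) (use i size_GR in auto)
    also have "2 + (i - ?p) - 1 + bsize ?L - 1 = i" using False by simp
    finally show ?thesis by simp
  qed
qed

lemma eval_gtree: "eval (gtree g) = gen_bnc g"
  using bnc_comp_unit_right[OF bnc_wf_gen, of _ g] bsize_gen[of g] by (simp add: gtree_def)

lemma range_eval: "range eval = gen_sub"
proof
  show "range eval \<subseteq> gen_sub"
  proof clarify
    fix t show "eval t \<in> gen_sub"
    proof (induction t)
      case (Node g l r)
      have "gen_bnc g \<in> gen_sub" by (cases g) (auto intro: gen_sub.intros)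
      then have "bnc_comp (gen_bnc g) 2 (eval r) \<in> gen_sub"
        by (rule gen_sub.comp[OF _ Node(2)]) (simp_all add: bsize_gen)
      then show ?case
        by (simp add: gen_sub.comp Node(1) bsize_gen arity_pos)
    qed (simp add: gen_sub.unit)
  qed
  show "gen_sub \<subseteq> range eval"
  proof
    fix C assume "C \<in> gen_sub"
    then show "C \<in> range eval"
    proof induction
      case unit
      show ?case by (metis eval.simps(1) rangeI)
    next
      case gs
      show ?case by (metis eval_gtree gen_bnc.simps(1) rangeI)
    next
      case gw
      show ?case by (metis eval_gtree gen_bnc.simps(2) rangeI)
    next
      case (comp C D i)
      then obtain t u where "C = eval t" "D = eval u" by auto
      with comp have "bnc_comp C i D = eval (graft t i u)" by (simp add: eval_graft)
      then show ?case by simp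
    qed
  qed
qed

lemma bnc_comp_w_w: "bnc_comp w_bnc 1 w_bnc = bnc_comp w_bnc 2 w_bnc"
  by (rule bnc_eq_int_arcsI)
    (simp_all add: blue_bnc_comp red_bnc_comp glue_def stretch_def w_bnc_def insert_Diff_if insert_commute)

lemma bnc_comp_s_s: "bnc_comp s_bnc 1 s_bnc = bnc_comp s_bnc 2 w_bnc"
  by (rule bnc_eq_int_arcsI)
    (simp_all add: blue_bnc_comp red_bnc_comp glue_def stretch_def s_bnc_def w_bnc_def insert_Diff_if insert_commute)

lemma eval_respects_cong: "cong t u \<Longrightarrow> eval t = eval u"
proof (induction rule: cong.induct)
  case rel1
  show ?case using bnc_comp_w_w by (simp add: eval_graft eval_gtree)
next
  case rel2
  show ?case using bnc_comp_s_s by (simp add: eval_graft eval_gtree)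
next
  case (compL t t' i u)
  then have "i \<le> arity t'" by (metis bsize_eval)
  with compL show ?case by (simp add: eval_graft)
next
  case (compR u u' i t)
  then show ?case by (simp add: eval_graft)
qed simp_all

section \<open>Normal forms\<close>

fun root_is :: "gen \<Rightarrow> tree \<Rightarrow> bool" where
  "root_is g Leaf = False"
| "root_is g (Node h l r) = (h = g)"

text \<open>Normal trees avoid the left-hand sides \<open>w \<circ>\<^sub>1 w\<close> and \<open>s \<circ>\<^sub>1 s\<close> of the oriented
relations.\<close>

fun normal :: "tree \<Rightarrow> bool" where
  "normal Leaf = True"
| "normal (Node g l r) = (normal l \<and> normal r \<and> \<not> root_is g l)"

lemma cong_Node_left: "cong l l' \<Longrightarrow> cong (Node g l r) (Node g l' r)"
  using compR[of l l' 1 "Node g Leaf r"] arity_pos[of r] by simp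

lemma cong_Node_right: "cong r r' \<Longrightarrow> cong (Node g l r) (Node g l r')"
  using compR[of r r' "arity l + 1" "Node g l Leaf"] by simp

lemma cong_rotate:
  assumes "cong (Node g (Node h Leaf Leaf) Leaf) (Node g' Leaf (Node h' Leaf Leaf))"
  shows "cong (Node g (Node h a b) c) (Node g' a (Node h' b c))"
proof -
  let ?t = "Node g (Node h Leaf Leaf) Leaf" and ?t' = "Node g' Leaf (Node h' Leaf Leaf)"
  have "cong (graft ?t 3 c) (graft ?t' 3 c)"
    by (rule compL[OF assms]) auto
  then have "cong (graft (graft ?t 3 c) 2 b) (graft (graft ?t' 3 c) 2 b)"
    by (rule compL) (auto simp: numeral_eq_Suc)
  then have "cong (graft (graft (graft ?t 3 c) 2 b) 1 a) (graft (graft (graft ?t' 3 c) 2 b) 1 a)"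
    by (rule compL) (auto simp: numeral_eq_Suc)
  then show ?thesis using arity_pos[of a] arity_pos[of b] arity_pos[of c] by (simp add: numeral_eq_Suc)
qed

lemma cong_W_W: "cong (Node W (Node W a b) c) (Node W a (Node W b c))"
  by (rule cong_rotate) (use cong.rel1 in \<open>simp add: gtree_def\<close>)

lemma cong_S_S: "cong (Node S (Node S a b) c) (Node S a (Node W b c))"
  by (rule cong_rotate) (use cong.rel2 in \<open>simp add: gtree_def\<close>)

fun node_W :: "tree \<Rightarrow> tree \<Rightarrow> tree" where
  "node_W (Node W a b) c = Node W a (node_W b c)"
| "node_W t c = Node W t c"

fun node_S :: "tree \<Rightarrow> tree \<Rightarrow> tree" where
  "node_S (Node S a b) c = Node S a (node_W b c)"
| "node_S t c = Node S t c"

fun normalize :: "tree \<Rightarrow> tree" where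
  "normalize Leaf = Leaf"
| "normalize (Node W l r) = node_W (normalize l) (normalize r)"
| "normalize (Node S l r) = node_S (normalize l) (normalize r)"

lemma node_W_normal: "normal l \<Longrightarrow> normal r \<Longrightarrow> normal (node_W l r) \<and> cong (Node W l r) (node_W l r)"
proof (induction l r rule: node_W.induct)
  case (1 a b c)
  then have IH: "normal (node_W b c) \<and> cong (Node W b c) (node_W b c)" by simp
  then have "cong (Node W (Node W a b) c) (Node W a (node_W b c))"
    using cong.trans[OF cong_W_W cong_Node_right] by blast
  then show ?case using 1 IH by simp
qed (auto intro: cong.refl)

lemma node_S_normal: "normal l \<Longrightarrow> normal r \<Longrightarrow> normal (node_S l r) \<and> cong (Node S l r) (node_S l r)"
proof (induction l r rule: node_S.induct)
  case (1 a b c)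
  then have W: "normal (node_W b c) \<and> cong (Node W b c) (node_W b c)" using node_W_normal by simp
  then have "cong (Node S (Node S a b) c) (Node S a (node_W b c))"
    using cong.trans[OF cong_S_S cong_Node_right] by blast
  then show ?case using 1 W by simp
qed (auto intro: cong.refl)

lemma normalize_normal: "normal (normalize t) \<and> cong t (normalize t)"
proof (induction t rule: normalize.induct)
  case (2 l r)
  have "cong (Node W l r) (Node W (normalize l) (normalize r))"
    using 2 cong.trans[OF cong_Node_left cong_Node_right] by blast
  then show ?case using node_W_normal[of "normalize l" "normalize r"] 2 cong.trans by auto
next
  case (3 l r)
  have "cong (Node S l r) (Node S (normalize l) (normalize r))"
    using 3 cong.trans[OF cong_Node_left cong_Node_right] by blast
  then show ?case using node_S_normal[of "normalize l" "normalize r"] 3 cong.trans by auto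
qed (simp add: cong.refl)

section \<open>Injectivity on normal trees\<close>

lemma int_arcs_blue_gen: "int_arcs (blue (gen_bnc g)) = (if g = S then {(1, 3), (2, 3)} else {(1, 2), (2, 3)})"
  by (cases g) (simp_all add: s_bnc_def w_bnc_def)

lemma int_arcs_red_gen: "int_arcs (red (gen_bnc g)) = {}"
  by (cases g) (simp_all add: s_bnc_def w_bnc_def)

lemma int_arcs_eval_Node_glue:
  fixes g :: gen and l r :: tree
  defines "p \<equiv> int (arity l)" and "q \<equiv> int (arity r)"
  shows "int_arcs (blue (eval (Node g l r))) =
      glue (glue (int_arcs (blue (gen_bnc g))) 2 (int_arcs (blue (eval r))) q ((1, q + 1) \<in> int_arcs (blue (eval r))))
        1 (int_arcs (blue (eval l))) p (g = W \<and> (1, p + 1) \<in> int_arcs (blue (eval l)))"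
    and "int_arcs (red (eval (Node g l r))) =
      glue (glue {} 2 (int_arcs (red (eval r))) q False)
        1 (int_arcs (red (eval l))) p (g = S \<and> (1, p + 1) \<notin> int_arcs (blue (eval l)))"
proof -
  have edge: "(1, 1 + 1) \<in> blue (bnc_comp (gen_bnc g) 2 (eval r)) \<longleftrightarrow> g = W"
    using blue_edge_bnc_comp_before[OF bnc_wf_eval, of 1 2 "gen_bnc g" r]
    by (cases g) (simp_all add: s_bnc_def w_bnc_def numeral_2_eq_2)
  have base: "(2, 3) \<in> blue (gen_bnc g)" by (cases g) (simp_all add: s_bnc_def w_bnc_def)
  have size: "1 \<le> bsize (eval l)" "1 \<le> bsize (eval r)" "1 \<le> (2::nat)" using arity_pos by simp_all
  have bases: "(1, arity l + 1) \<in> blue (eval l) \<longleftrightarrow> (1, p + 1) \<in> int_arcs (blue (eval l))"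
    "(1, arity r + 1) \<in> blue (eval r) \<longleftrightarrow> (1, q + 1) \<in> int_arcs (blue (eval r))"
    unfolding p_def q_def using mem_int_arcs[of 1 "arity l + 1"] mem_int_arcs[of 1 "arity r + 1"]
    by (simp_all add: ac_simps)
  show "int_arcs (blue (eval (Node g l r))) =
      glue (glue (int_arcs (blue (gen_bnc g))) 2 (int_arcs (blue (eval r))) q ((1, q + 1) \<in> int_arcs (blue (eval r))))
        1 (int_arcs (blue (eval l))) p (g = W \<and> (1, p + 1) \<in> int_arcs (blue (eval l)))"
    unfolding eval.simps blue_bnc_comp[OF order_refl size(1)] blue_bnc_comp[OF size(3) size(2)]
      bsize_eval edge p_def[symmetric] q_def[symmetric] bases of_nat_1 of_nat_numeral
    using base by simp
  show "int_arcs (red (eval (Node g l r))) =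
      glue (glue {} 2 (int_arcs (red (eval r))) q False)
        1 (int_arcs (red (eval l))) p (g = S \<and> (1, p + 1) \<notin> int_arcs (blue (eval l)))"
    unfolding eval.simps red_bnc_comp[OF order_refl size(1)] red_bnc_comp[OF size(3) size(2)]
      bsize_eval edge p_def[symmetric] q_def[symmetric] bases of_nat_1 of_nat_numeral int_arcs_red_gen
    using base by (cases g) simp_all
qed

lemma int_arcs_eval_subset_box:
  "int_arcs (blue (eval t)) \<subseteq> box (int (arity t))" "int_arcs (red (eval t)) \<subseteq> box (int (arity t))"
  using bnc_wfD(3,4)[OF bnc_wf_eval, of t] by (auto simp: diagonals_def)

lemma int_arcs_red_eval_no_base: "(1, int (arity t) + 1) \<notin> int_arcs (red (eval t))"
  using bnc_wfD(4)[OF bnc_wf_eval, of t] by (auto simp: diagonals_def)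

lemma int_arcs_blue_eval_Node:
  fixes g :: gen and l r :: tree
  defines "p \<equiv> int (arity l)" and "q \<equiv> int (arity r)"
  shows "int_arcs (blue (eval (Node g l r))) =
    (if g = W then int_arcs (blue (eval l)) else int_arcs (blue (eval l)) - {(1, p + 1)})
    \<union> shift p (int_arcs (blue (eval r))) \<union> (if g = S then {(1, p + q + 1)} else {})"
proof -
  have "int_arcs (blue (eval (Node g l r))) =
      int_arcs (blue (eval l)) - {(1, p + 1)} \<union> shift p (int_arcs (blue (eval r)) - {(1, q + 1)})
      \<union> (if (1, q + 1) \<in> int_arcs (blue (eval r)) then {(p + 1, p + q + 1)} else {})
      \<union> (if g = W \<and> (1, p + 1) \<in> int_arcs (blue (eval l)) then {(1, p + 1)} else {})
      \<union> (if g = S then {(1, p + q + 1)} else {})"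
    unfolding int_arcs_eval_Node_glue p_def q_def using arity_pos[of l] arity_pos[of r]
    by (subst glue_binary[OF _ int_arcs_eval_subset_box(1) int_arcs_eval_subset_box(1)])
      (auto simp: int_arcs_blue_gen box_def)
  then show ?thesis by (cases g) (auto simp: mem_shift)
qed

lemma int_arcs_red_eval_Node:
  fixes g :: gen and l r :: tree
  defines "p \<equiv> int (arity l)"
  shows "int_arcs (red (eval (Node g l r))) =
    int_arcs (red (eval l)) \<union> shift p (int_arcs (red (eval r)))
    \<union> (if g = S \<and> (1, p + 1) \<notin> int_arcs (blue (eval l)) then {(1, p + 1)} else {})"
proof -
  have "int_arcs (red (eval (Node g l r))) =
      int_arcs (red (eval l)) - {(1, p + 1)} \<union> shift p (int_arcs (red (eval r)) - {(1, int (arity r) + 1)})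
      \<union> (if g = S \<and> (1, p + 1) \<notin> int_arcs (blue (eval l)) then {(1, p + 1)} else {})"
    unfolding int_arcs_eval_Node_glue p_def using arity_pos[of l] arity_pos[of r]
    by (subst glue_binary[OF _ int_arcs_eval_subset_box(2) int_arcs_eval_subset_box(2)]) simp_all
  then show ?thesis
    using int_arcs_red_eval_no_base[of l] int_arcs_red_eval_no_base[of r] by (auto simp: p_def)
qed

lemma int_arcs_blue_evalD: "(a, b) \<in> int_arcs (blue (eval t)) \<Longrightarrow> 1 \<le> a \<and> a < b \<and> b \<le> int (arity t) + 1"
  using bnc_wfD(3)[OF bnc_wf_eval, of t] by (auto simp: box_def)

lemma int_arcs_red_evalD: "(a, b) \<in> int_arcs (red (eval t)) \<Longrightarrow> 1 \<le> a \<and> a < b \<and> b \<le> int (arity t) + 1"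
  using bnc_wfD(4)[OF bnc_wf_eval, of t] by (auto simp: box_def diagonals_def)

lemma int_arcs_eval_children:
  fixes g :: gen and l r :: tree
  defines "p \<equiv> int (arity l)"
    and "BN \<equiv> int_arcs (blue (eval (Node g l r)))" and "RN \<equiv> int_arcs (red (eval (Node g l r)))"
  shows "int_arcs (blue (eval l)) = {(a, b) \<in> BN. b \<le> p + 1 \<and> (a, b) \<noteq> (1, p + 1)}
      \<union> (if (if g = W then (1, p + 1) \<in> BN else (1, p + 1) \<notin> RN) then {(1, p + 1)} else {})"
    and "int_arcs (red (eval l)) = {(a, b) \<in> RN. b \<le> p + 1 \<and> (a, b) \<noteq> (1, p + 1)}"
    and "int_arcs (blue (eval r)) = {(a, b). 1 \<le> a \<and> (a + p, b + p) \<in> BN}"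
    and "int_arcs (red (eval r)) = {(a, b). 1 \<le> a \<and> (a + p, b + p) \<in> RN}"
  unfolding BN_def RN_def int_arcs_blue_eval_Node int_arcs_red_eval_Node p_def
  using int_arcs_red_eval_no_base[of l] arity_pos[of l]
  by (cases g; auto simp: set_eq_iff mem_shift dest: int_arcs_blue_evalD int_arcs_red_evalD)+

lemma eval_Node_inject:
  assumes eq: "eval (Node g l r) = eval (Node g l' r')" and p: "arity l = arity l'"
  shows "eval l = eval l'" "eval r = eval r'"
proof -
  have "arity r = arity r'"
    using arg_cong[OF eq, of bsize] p arity_pos[of l'] arity_pos[of r] arity_pos[of r'] by (simp add: bsize_gen)
  then show "eval l = eval l'" "eval r = eval r'"
    using int_arcs_eval_children[where g=g and l=l and r=r] int_arcs_eval_children[where g=g and l=l' and r=r'] eq p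
    by (auto intro!: bnc_eq_int_arcsI)
qed

lemma arity_Leaf_iff: "arity t = 1 \<longleftrightarrow> t = Leaf"
proof (cases t)
  case (Node g a b)
  then show ?thesis using arity_pos[of a] arity_pos[of b] by simp
qed simp

lemma root_is_S_iff: "t \<noteq> Leaf \<Longrightarrow> root_is S t \<longleftrightarrow> \<not> root_is W t"
proof (cases t)
  case (Node h a b)
  then show ?thesis by (cases h) simp_all
qed simp

lemma blue_base_eval: "(1, int (arity t) + 1) \<in> int_arcs (blue (eval t)) \<longleftrightarrow> t = Leaf \<or> root_is S t"
proof (cases t)
  case Leaf
  then show ?thesis by (simp add: bnc_unit_def)
next
  case (Node g l r)
  then show ?thesis
    unfolding Node int_arcs_blue_eval_Node int_arcs_red_eval_Node using arity_pos[of l] arity_pos[of r]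
    by (auto simp: mem_shift dest: int_arcs_blue_evalD)
qed

lemma blue_first_vertex_Node_W:
  assumes "(1, j) \<in> int_arcs (blue (eval (Node W l r)))"
  shows "j \<le> int (arity l) + 1"
  using assms arity_pos[of l] unfolding int_arcs_blue_eval_Node int_arcs_red_eval_Node
  by (auto simp: mem_shift dest: int_arcs_blue_evalD)

lemma red_first_vertex_Node:
  assumes "(1, j) \<in> int_arcs (red (eval (Node g l r)))"
  shows "j \<le> int (arity l) + 1"
  using assms arity_pos[of l] unfolding int_arcs_blue_eval_Node int_arcs_red_eval_Node
  by (auto simp: mem_shift dest: int_arcs_red_evalD split: if_splits)

text \<open>Under \<open>w\<close> the base of a normal \<open>l\<close> stays blue and is the longest blue arc at vertex 1;
under \<open>s\<close> a non-leaf \<open>l\<close> is rooted at \<open>w\<close>, so its base turns red and is the longest red one.\<close>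

lemma arity_left_le:
  assumes nt: "normal (Node g l r)" and nt': "normal (Node g l' r')"
    and eq: "eval (Node g l r) = eval (Node g l' r')"
  shows "arity l \<le> arity l'"
proof (cases g)
  case W
  then have "l = Leaf \<or> root_is S l" using nt root_is_S_iff[of l] by auto
  then have "(1, int (arity l) + 1) \<in> int_arcs (blue (eval (Node W l r)))"
    unfolding int_arcs_blue_eval_Node int_arcs_red_eval_Node using blue_base_eval[of l] by simp
  then have "(1, int (arity l) + 1) \<in> int_arcs (blue (eval (Node W l' r')))"
    using eq W by (simp del: eval.simps)
  then have "int (arity l) + 1 \<le> int (arity l') + 1"
    by (rule blue_first_vertex_Node_W)
  then show ?thesis by simp
next
  case S
  show ?thesis
  proof (rule ccontr)
    assume "\<not> arity l \<le> arity l'"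
    then have "l \<noteq> Leaf" using arity_pos[of l'] arity_Leaf_iff[of l] by auto
    then have "\<not> (l = Leaf \<or> root_is S l)" using nt S by simp
    then have "(1, int (arity l) + 1) \<in> int_arcs (red (eval (Node S l r)))"
      unfolding int_arcs_blue_eval_Node int_arcs_red_eval_Node using blue_base_eval[of l] by simp
    then have "(1, int (arity l) + 1) \<in> int_arcs (red (eval (Node S l' r')))"
      using eq S by (simp del: eval.simps)
    then have "int (arity l) + 1 \<le> int (arity l') + 1"
      by (rule red_first_vertex_Node)
    with \<open>\<not> arity l \<le> arity l'\<close> show False by simp
  qed
qed

lemma eval_inj_normal:
  assumes "normal t" "normal u" "eval t = eval u"
  shows "t = u"
  using assms
proof (induction t arbitrary: u)
  case Leaf
  then have "arity u = 1" by (metis bsize_eval arity.simps(1))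
  then show ?case by (metis arity_Leaf_iff)
next
  case (Node g l r)
  have "arity u \<noteq> 1"
    using arg_cong[OF Node.prems(3), of bsize] arity_pos[of l] arity_pos[of r] by (simp add: bsize_gen)
  then obtain g' l' r' where u: "u = Node g' l' r'" by (cases u) auto
  have size: "arity (Node g l r) = arity u" by (metis bsize_eval Node.prems(3))
  have "g = S \<longleftrightarrow> (1, int (arity u) + 1) \<in> int_arcs (blue (eval u))"
    using blue_base_eval[of "Node g l r"] unfolding Node.prems(3) size by simp
  also have "\<dots> \<longleftrightarrow> g' = S" using blue_base_eval[of u] u by simp
  finally have "g' = g" by (cases g; cases g') simp_all
  then have eq: "eval (Node g l r) = eval (Node g l' r')" and nt': "normal (Node g l' r')"
    using Node.prems u by simp_all
  have "arity l = arity l'"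
    using arity_left_le[OF Node.prems(1) nt' eq] arity_left_le[OF nt' Node.prems(1) eq[symmetric]] by simp
  with eq have "eval l = eval l'" "eval r = eval r'" by (rule eval_Node_inject)+
  with Node.IH Node.prems(1) nt' have "l = l'" "r = r'" by simp_all
  then show ?case using u \<open>g' = g\<close> by simp
qed

lemma eval_eq_iff_cong: "eval t = eval u \<longleftrightarrow> cong t u"
proof
  assume "eval t = eval u"
  then have "eval (normalize t) = eval (normalize u)"
    using eval_respects_cong normalize_normal by metis
  then have "normalize t = normalize u"
    using eval_inj_normal normalize_normal by blast
  then show "cong t u"
    using normalize_normal cong.sym cong.trans by metis
qed (rule eval_respects_cong)

theorem theorem3p30:
  shows "(\<forall>t i u. 1 \<le> i \<and> i \<le> arity t \<longrightarrow> eval (graft t i u) = bnc_comp (eval t) i (eval u))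
    \<and> (\<forall>t. bsize (eval t) = arity t)
    \<and> eval ` UNIV = gen_sub
    \<and> (\<forall>t u. eval t = eval u \<longleftrightarrow> cong t u)"
  using eval_graft range_eval eval_eq_iff_cong by simp

end
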